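(* Let $H$ be a complex separable Hilbert space and let $S,T\in B(H)$ be normal operators with Cartesian decompositions $S=A+iC$ and $T=B+iD$ ($A,B,C,D$ self-adjoint) such that $C$ and $D$ are positive. Then $$\|ST-TS\|\le \frac12\sqrt{4\|A\|^2+\|C\|^2}\,\sqrt{4\|B\|^2+\|D\|^2}.$$
   Context: $B(H)$ denotes the algebra of bounded linear operators on $H$ with the operator norm. The Cartesian decomposition of $S\in B(H)$ is $S=A+iC$ with $A=\frac{S+S^*}{2}$ and $C=\frac{S-S^*}{2i}$ self-adjoint. *)

theory Defs
  imports "HOL-Analysis.Analysis"
begin

text \<open>Complex Hilbert spaces (not available in the distribution): a complete
  normed space with a complex scalar multiplication (compatible with the real one)
  and a complex inner product, conjugate-linear in the first argument, inducing the norm.\<close>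

class chilbert = real_normed_vector + complete_space +
  fixes cscale :: "complex \<Rightarrow> 'a \<Rightarrow> 'a"
    and cinner :: "'a \<Rightarrow> 'a \<Rightarrow> complex"
  assumes cscale_add_right: "cscale a (x + y) = cscale a x + cscale a y"
    and cscale_add_left: "cscale (a + b) x = cscale a x + cscale b x"
    and cscale_cscale: "cscale a (cscale b x) = cscale (a * b) x"
    and cscale_one: "cscale 1 x = x"
    and scaleR_cscale: "scaleR r x = cscale (complex_of_real r) x"
    and cinner_commute: "cinner x y = cnj (cinner y x)"
    and cinner_add_left: "cinner (x + y) z = cinner x z + cinner y z"
    and cinner_cscale_left: "cinner (cscale c x) y = cnj c * cinner x y"
    and cinner_self_nonneg: "0 \<le> Re (cinner x x)"
    and cinner_self_eq_0: "cinner x x = 0 \<longleftrightarrow> x = 0"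
    and norm_eq_sqrt_cinner: "norm x = sqrt (Re (cinner x x))"

definition bounded_op :: "('a::chilbert \<Rightarrow> 'a) \<Rightarrow> bool" where
  "bounded_op S \<longleftrightarrow> (\<forall>x y. S (x + y) = S x + S y) \<and> (\<forall>c x. S (cscale c x) = cscale c (S x))
     \<and> (\<exists>K. \<forall>x. norm (S x) \<le> norm x * K)"

definition is_adjoint :: "('a::chilbert \<Rightarrow> 'a) \<Rightarrow> ('a \<Rightarrow> 'a) \<Rightarrow> bool" where
  "is_adjoint S S' \<longleftrightarrow> (\<forall>x y. cinner (S x) y = cinner x (S' y))"

definition selfadjoint_op :: "('a::chilbert \<Rightarrow> 'a) \<Rightarrow> bool" where
  "selfadjoint_op S \<longleftrightarrow> bounded_op S \<and> is_adjoint S S"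

definition normal_op :: "('a::chilbert \<Rightarrow> 'a) \<Rightarrow> bool" where
  "normal_op S \<longleftrightarrow> bounded_op S \<and> (\<exists>S'. is_adjoint S S' \<and> S \<circ> S' = S' \<circ> S)"

definition positive_op :: "('a::chilbert \<Rightarrow> 'a) \<Rightarrow> bool" where
  "positive_op C \<longleftrightarrow> selfadjoint_op C \<and> (\<forall>x. 0 \<le> Re (cinner (C x) x))"

definition separable_space :: "'a::metric_space itself \<Rightarrow> bool" where
  "separable_space _ \<longleftrightarrow> (\<exists>D::'a set. countable D \<and> closure D = UNIV)"

end

theory Submission
  imports Defs
begin

text \<open>Shifting by scalars does not change a commutator: \<open>ST - TS = (S - \<alpha>)(T - \<beta>) - (T - \<beta>)(S - \<alpha>)\<close>,
  so \<open>\<parallel>ST - TS\<parallel> \<le> 2 \<parallel>S - \<alpha>\<parallel> \<parallel>T - \<beta>\<parallel>\<close>. Take \<open>\<alpha> = i\<parallel>C\<parallel>/2\<close>. Then \<open>S - \<alpha> = A + i(C - \<parallel>C\<parallel>/2)\<close>,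
  and normality of \<open>S\<close> makes \<open>Im \<langle>Ax, Cx\<rangle> = 0\<close>, so the cross term
  vanishes and \<open>\<parallel>(S - \<alpha>)x\<parallel>\<^sup>2 = \<parallel>Ax\<parallel>\<^sup>2 + \<parallel>(C - \<parallel>C\<parallel>/2)x\<parallel>\<^sup>2\<close>. Positivity gives
  \<open>\<parallel>Cx\<parallel>\<^sup>2 \<le> \<parallel>C\<parallel> \<langle>Cx, x\<rangle>\<close>, hence \<open>\<parallel>C - \<parallel>C\<parallel>/2\<parallel> \<le> \<parallel>C\<parallel>/2\<close> and
  \<open>\<parallel>S - \<alpha>\<parallel> \<le> \<surd>(4\<parallel>A\<parallel>\<^sup>2 + \<parallel>C\<parallel>\<^sup>2) / 2\<close>.\<close>

interpretation cscale: module "cscale :: complex \<Rightarrow> 'a::chilbert \<Rightarrow> 'a"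
  by unfold_locales (simp_all add: cscale_add_right cscale_add_left cscale_cscale cscale_one)

lemma cinner_add_right: "cinner x (y + z) = cinner x y + cinner x z"
  by (metis cinner_commute cinner_add_left complex_cnj_add)

lemma cinner_cscale_right: "cinner x (cscale c y) = c * cinner x y"
  by (metis cinner_commute cinner_cscale_left complex_cnj_cnj complex_cnj_mult)

lemma cinner_scaleR_left: "cinner (scaleR r x) y = of_real r * cinner x y"
  by (simp add: scaleR_cscale cinner_cscale_left)

lemma cinner_scaleR_right: "cinner x (scaleR r y) = of_real r * cinner x y"
  by (simp add: scaleR_cscale cinner_cscale_right)

lemma cinner_minus_left: "cinner (- x) y = - cinner x y"
  using cinner_scaleR_left[of "- 1" x y] by simp

lemma cinner_minus_right: "cinner x (- y) = - cinner x y"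
  using cinner_scaleR_right[of x "- 1" y] by simp

lemma cinner_diff_left: "cinner (x - y) z = cinner x z - cinner y z"
  by (simp only: diff_conv_add_uminus cinner_add_left cinner_minus_left)

lemma cinner_diff_right: "cinner x (y - z) = cinner x y - cinner x z"
  by (simp only: diff_conv_add_uminus cinner_add_right cinner_minus_right)

lemma Re_cinner_commute: "Re (cinner y x) = Re (cinner x y)"
  by (subst cinner_commute) simp

lemma Im_cinner_self: "Im (cinner x x) = 0"
  by (metis cinner_commute cnj.sel(2) neg_equal_zero)

lemma power2_norm_eq_cinner: "(norm x)\<^sup>2 = Re (cinner x x)"
  by (simp add: norm_eq_sqrt_cinner cinner_self_nonneg)

lemma cinner_self_eq_norm_power2: "cinner x x = complex_of_real ((norm x)\<^sup>2)"
  by (simp add: power2_norm_eq_cinner complex_eq_iff Im_cinner_self)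

lemma power2_norm_add_cscale:
  "(norm (u + cscale z v))\<^sup>2 = (norm u)\<^sup>2 + (cmod z)\<^sup>2 * (norm v)\<^sup>2 + 2 * Re (z * cinner u v)"
proof -
  have "cnj z * z = complex_of_real ((cmod z)\<^sup>2)"
    by (metis complex_norm_square mult.commute)
  then have "cinner (u + cscale z v) (u + cscale z v)
      = cinner u u + cnj (z * cinner u v) + z * cinner u v + complex_of_real ((cmod z)\<^sup>2) * cinner v v"
    by (simp add: cinner_add_left cinner_add_right cinner_cscale_left cinner_cscale_right
        cinner_commute[of v u] algebra_simps)
  then show ?thesis
    by (simp add: power2_norm_eq_cinner)
qed

lemma power2_norm_diff_scaleR:
  "(norm (u - scaleR r x))\<^sup>2 = (norm u)\<^sup>2 - 2 * r * Re (cinner u x) + r\<^sup>2 * (norm x)\<^sup>2"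
proof -
  have "cinner (u - scaleR r x) (u - scaleR r x)
     = cinner u u - of_real r * cinner u x - of_real r * cinner x u + of_real (r\<^sup>2) * cinner x x"
    by (simp add: cinner_diff_left cinner_diff_right cinner_scaleR_left cinner_scaleR_right
        power2_eq_square algebra_simps)
  then show ?thesis
    by (simp add: power2_norm_eq_cinner Re_cinner_commute[of u x])
qed

lemma bounded_op_add: "bounded_op S \<Longrightarrow> S (x + y) = S x + S y"
  by (simp add: bounded_op_def)

lemma bounded_op_cscale: "bounded_op S \<Longrightarrow> S (cscale c x) = cscale c (S x)"
  by (simp add: bounded_op_def)

lemma bounded_op_scaleR: "bounded_op S \<Longrightarrow> S (scaleR r x) = scaleR r (S x)"
  by (simp add: scaleR_cscale bounded_op_cscale)

lemma bounded_op_imp_bounded_linear: "bounded_op S \<Longrightarrow> bounded_linear S"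
proof -
  assume S: "bounded_op S"
  then obtain K where "\<forall>x. norm (S x) \<le> norm x * K"
    by (auto simp: bounded_op_def)
  with S show ?thesis
    by (intro bounded_linear_intro[of S K]) (auto simp: bounded_op_add bounded_op_scaleR)
qed

lemma bounded_op_diff: "bounded_op S \<Longrightarrow> S (x - y) = S x - S y"
  by (rule linear_diff[OF bounded_linear.linear[OF bounded_op_imp_bounded_linear]])

lemma bounded_op_norm_le: "bounded_op S \<Longrightarrow> norm (S x) \<le> onorm S * norm x"
  by (rule onorm[OF bounded_op_imp_bounded_linear])

lemma bounded_op_onorm_nonneg: "bounded_op S \<Longrightarrow> 0 \<le> onorm S"
  by (rule onorm_pos_le[OF bounded_op_imp_bounded_linear])

lemma positive_op_id: "positive_op (\<lambda>x::'a::chilbert. x)"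
  by (auto simp: positive_op_def selfadjoint_op_def bounded_op_def is_adjoint_def
      cinner_self_nonneg intro: exI[of _ 1])

lemma positive_op_quadratic_nonneg:
  fixes C :: "'a::chilbert \<Rightarrow> 'a" and x y :: 'a
  assumes "positive_op C"
  defines "W \<equiv> (cmod (cinner (C x) y))\<^sup>2"
  shows "0 \<le> Re (cinner (C x) x) + 2 * t * W + t\<^sup>2 * W * Re (cinner (C y) y)"
proof -
  have C: "bounded_op C" "is_adjoint C C" and pos: "\<And>v. 0 \<le> Re (cinner (C v) v)"
    using assms by (auto simp: positive_op_def selfadjoint_op_def)
  define w where "w = cinner (C x) y"
  define k where "k = complex_of_real t * cnj w"
  have "cinner (C y) x = cnj w"
    using C(2) unfolding is_adjoint_def w_def by (metis cinner_commute)
  then have expand: "cinner (C (x + cscale k y)) (x + cscale k y)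
      = cinner (C x) x + k * w + cnj (k * w) + cnj k * k * cinner (C y) y"
    using C(1) by (simp add: bounded_op_add bounded_op_cscale cinner_add_left cinner_add_right
        cinner_cscale_left cinner_cscale_right w_def[symmetric] algebra_simps)
  have kw: "k * w = complex_of_real (t * W)"
    unfolding k_def W_def w_def by (simp add: complex_norm_square[symmetric] mult.commute)
  have kk: "cnj k * k = complex_of_real (t\<^sup>2 * W)"
  proof -
    have "(cmod k)\<^sup>2 = t\<^sup>2 * W"
      unfolding k_def W_def w_def by (simp add: norm_mult power_mult_distrib)
    then show ?thesis
      by (metis complex_norm_square mult.commute)
  qed
  have "Re (cinner (C (x + cscale k y)) (x + cscale k y))
      = Re (cinner (C x) x) + 2 * t * W + t\<^sup>2 * W * Re (cinner (C y) y)"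
    unfolding expand kw kk by simp
  then show ?thesis
    using pos[of "x + cscale k y"] by simp
qed

lemma positive_op_Cauchy_Schwarz:
  assumes "positive_op C"
  shows "(cmod (cinner (C x) y))\<^sup>2 \<le> Re (cinner (C x) x) * Re (cinner (C y) y)"
proof -
  define W where "W = (cmod (cinner (C x) y))\<^sup>2"
  define P where "P = Re (cinner (C x) x)"
  define Q where "Q = Re (cinner (C y) y)"
  have quad: "0 \<le> P + 2 * t * W + t\<^sup>2 * W * Q" for t
    unfolding W_def P_def Q_def by (rule positive_op_quadratic_nonneg[OF assms])
  have "Q \<ge> 0"
    using assms by (simp add: Q_def positive_op_def)
  then consider "Q > 0" | "Q = 0"
    by linarith
  then have "W \<le> P * Q"
  proof cases
    case 1
    with quad[of "- 1 / Q"] show ?thesis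
      by (simp add: power2_eq_square field_simps)
  next
    case 2
    with quad[of "- (P + 1) / (2 * W)"] show ?thesis
      by (cases "W = 0") (simp_all add: W_def field_simps)
  qed
  then show ?thesis
    by (simp add: W_def P_def Q_def)
qed

lemma norm_cinner_le: "cmod (cinner x y) \<le> norm x * norm y"
proof (rule power2_le_imp_le)
  show "(cmod (cinner x y))\<^sup>2 \<le> (norm x * norm y)\<^sup>2"
    using positive_op_Cauchy_Schwarz[OF positive_op_id, of x y]
    by (simp add: power2_norm_eq_cinner power_mult_distrib)
qed simp

lemma positive_op_norm_power2_le:
  assumes "positive_op C"
  shows "(norm (C x))\<^sup>2 \<le> onorm C * Re (cinner (C x) x)"
proof -
  have C: "bounded_op C" and P: "0 \<le> Re (cinner (C x) x)"
    using assms by (auto simp: positive_op_def selfadjoint_op_def)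
  have "Re (cinner (C (C x)) (C x)) \<le> norm (C (C x)) * norm (C x)"
    using complex_Re_le_cmod norm_cinner_le order_trans by blast
  also have "\<dots> \<le> onorm C * (norm (C x))\<^sup>2"
    using mult_right_mono[OF bounded_op_norm_le[OF C, of "C x"] norm_ge_zero[of "C x"]]
    by (simp add: power2_eq_square mult.assoc)
  finally have CCx: "Re (cinner (C (C x)) (C x)) \<le> onorm C * (norm (C x))\<^sup>2" .
  have "(norm (C x))\<^sup>2 * (norm (C x))\<^sup>2 = (cmod (cinner (C x) (C x)))\<^sup>2"
    by (simp add: cinner_self_eq_norm_power2 norm_mult power2_eq_square)
  also have "\<dots> \<le> Re (cinner (C x) x) * Re (cinner (C (C x)) (C x))"
    by (rule positive_op_Cauchy_Schwarz[OF assms])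
  also have "\<dots> \<le> onorm C * Re (cinner (C x) x) * (norm (C x))\<^sup>2"
    using mult_left_mono[OF CCx P] by (simp add: algebra_simps)
  finally have le: "(norm (C x))\<^sup>2 * (norm (C x))\<^sup>2 \<le> onorm C * Re (cinner (C x) x) * (norm (C x))\<^sup>2" .
  show ?thesis
  proof (cases "C x = 0")
    case True
    then show ?thesis
      using bounded_op_onorm_nonneg[OF C] P by simp
  next
    case False
    then show ?thesis
      using mult_right_le_imp_le[OF le] by simp
  qed
qed

lemma positive_op_norm_shift_le:
  assumes "positive_op C"
  shows "norm (C x - scaleR (onorm C / 2) x) \<le> onorm C / 2 * norm x"
proof (rule power2_le_imp_le)
  show "(norm (C x - scaleR (onorm C / 2) x))\<^sup>2 \<le> (onorm C / 2 * norm x)\<^sup>2"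
    using positive_op_norm_power2_le[OF assms, of x]
    by (simp add: power2_norm_diff_scaleR power_mult_distrib power_divide)
  show "0 \<le> onorm C / 2 * norm x"
    using assms by (simp add: positive_op_def selfadjoint_op_def bounded_op_onorm_nonneg)
qed

lemma adjoint_cartesian:
  assumes "is_adjoint S S'" and "selfadjoint_op A" and "selfadjoint_op C"
    and S: "\<forall>x. S x = A x + cscale \<i> (C x)"
  shows "S' y = A y - cscale \<i> (C y)"
proof -
  have A: "cinner (A u) v = cinner u (A v)" and C: "cinner (C u) v = cinner u (C v)" for u v
    using assms(2,3) by (auto simp: selfadjoint_op_def is_adjoint_def)
  define d where "d = S' y - (A y - cscale \<i> (C y))"
  have "cinner d d = cinner (S d) y - cinner d (A y - cscale \<i> (C y))"
    using assms(1) by (simp add: d_def cinner_diff_right is_adjoint_def)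
  also have "\<dots> = 0"
    using S by (simp add: cinner_add_left cinner_cscale_left cinner_diff_right cinner_cscale_right A C)
  finally have "d = 0"
    by (simp add: cinner_self_eq_0)
  then show ?thesis
    by (simp add: d_def)
qed

text \<open>Normality means \<open>\<parallel>Sx\<parallel> = \<parallel>S\<^sup>*x\<parallel>\<close>, and these two norms differ by \<open>4 Im \<langle>Ax, Cx\<rangle>\<close>.\<close>

lemma normal_op_Im_cinner_cartesian:
  assumes "normal_op S" and "selfadjoint_op A" and "selfadjoint_op C"
    and S: "\<forall>x. S x = A x + cscale \<i> (C x)"
  shows "Im (cinner (A x) (C x)) = 0"
proof -
  obtain S' where adj: "is_adjoint S S'" and comm: "S \<circ> S' = S' \<circ> S"
    using assms(1) by (auto simp: normal_op_def)
  have S': "S' y = A y + cscale (- \<i>) (C y)" for y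
    using adjoint_cartesian[OF adj assms(2,3) S, of y] by simp
  have adj': "cinner (S' u) v = cinner u (S v)" for u v
    using adj unfolding is_adjoint_def by (metis cinner_commute)
  have "Re (cinner (S x) (S x)) = Re (cinner x (S' (S x)))"
    using adj by (simp add: is_adjoint_def)
  also have "S' (S x) = S (S' x)"
    using comm by (metis comp_apply)
  also have "Re (cinner x (S (S' x))) = Re (cinner (S' x) (S' x))"
    by (simp add: adj')
  finally have "(norm (S x))\<^sup>2 = (norm (S' x))\<^sup>2"
    by (simp add: power2_norm_eq_cinner)
  also have "(norm (S x))\<^sup>2 = (norm (A x))\<^sup>2 + (norm (C x))\<^sup>2 - 2 * Im (cinner (A x) (C x))"
    using S by (simp add: power2_norm_add_cscale)
  also have "(norm (S' x))\<^sup>2 = (norm (A x))\<^sup>2 + (norm (C x))\<^sup>2 + 2 * Im (cinner (A x) (C x))"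
    unfolding S' power2_norm_add_cscale by simp
  finally show ?thesis
    by simp
qed

lemma normal_op_norm_shift_le:
  assumes "normal_op S" and "selfadjoint_op A" and "positive_op C"
    and S: "\<forall>x. S x = A x + cscale \<i> (C x)"
  shows "norm (S x - cscale (\<i> * complex_of_real (onorm C / 2)) x)
    \<le> sqrt (4 * (onorm A)\<^sup>2 + (onorm C)\<^sup>2) / 2 * norm x"
proof (rule power2_le_imp_le)
  have C: "selfadjoint_op C"
    using assms(3) by (simp add: positive_op_def)
  have A: "bounded_op A" "is_adjoint A A"
    using assms(2) by (simp_all add: selfadjoint_op_def)
  define r where "r = onorm C / 2"
  define E where "E = C x - scaleR r x"
  have shift: "S x - cscale (\<i> * complex_of_real r) x = A x + cscale \<i> E"
    using S by (simp add: E_def scaleR_cscale cscale.scale_right_diff_distrib cscale_cscale)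
  have "cinner (A x) x = cnj (cinner (A x) x)"
    using A(2) cinner_commute[of x "A x"] by (simp add: is_adjoint_def)
  then have "Im (cinner (A x) x) = 0"
    by (simp add: complex_eq_iff)
  then have "Im (cinner (A x) E) = 0"
    using normal_op_Im_cinner_cartesian[OF assms(1,2) C S, of x]
    by (simp add: E_def cinner_diff_right cinner_scaleR_right)
  then have "(norm (S x - cscale (\<i> * complex_of_real r) x))\<^sup>2 = (norm (A x))\<^sup>2 + (norm E)\<^sup>2"
    unfolding shift by (simp add: power2_norm_add_cscale)
  also have "\<dots> \<le> (onorm A * norm x)\<^sup>2 + (r * norm x)\<^sup>2"
  proof (rule add_mono)
    show "(norm (A x))\<^sup>2 \<le> (onorm A * norm x)\<^sup>2"
      by (rule power_mono[OF bounded_op_norm_le[OF A(1)] norm_ge_zero])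
    show "(norm E)\<^sup>2 \<le> (r * norm x)\<^sup>2"
      unfolding E_def r_def by (rule power_mono[OF positive_op_norm_shift_le[OF assms(3)] norm_ge_zero])
  qed
  also have "\<dots> = ((onorm A)\<^sup>2 + r\<^sup>2) * (norm x)\<^sup>2"
    by (simp add: power_mult_distrib distrib_right)
  also have "(onorm A)\<^sup>2 + r\<^sup>2 = (sqrt (4 * (onorm A)\<^sup>2 + (onorm C)\<^sup>2) / 2)\<^sup>2"
    by (simp add: r_def power_divide)
  finally show "(norm (S x - cscale (\<i> * complex_of_real (onorm C / 2)) x))\<^sup>2
      \<le> (sqrt (4 * (onorm A)\<^sup>2 + (onorm C)\<^sup>2) / 2 * norm x)\<^sup>2"
    by (simp only: r_def power_mult_distrib)
qed simp

lemma onorm_commutator_le: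
  assumes S: "bounded_op S" and T: "bounded_op T"
    and n: "0 \<le> n" "\<And>x. norm (S x - cscale \<alpha> x) \<le> n * norm x"
    and m: "0 \<le> m" "\<And>x. norm (T x - cscale \<beta> x) \<le> m * norm x"
  shows "onorm (\<lambda>x. S (T x) - T (S x)) \<le> 2 * n * m"
proof (rule onorm_bound)
  fix x
  define N where "N = (\<lambda>y. S y - cscale \<alpha> y)"
  define M where "M = (\<lambda>y. T y - cscale \<beta> y)"
  have "S (T x) - T (S x) = N (M x) - M (N x)"
    unfolding N_def M_def
    by (simp add: bounded_op_diff[OF S] bounded_op_diff[OF T] bounded_op_cscale[OF S]
        bounded_op_cscale[OF T] cscale.scale_right_diff_distrib cscale_cscale mult.commute)
  also have "norm \<dots> \<le> norm (N (M x)) + norm (M (N x))"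
    by (rule norm_triangle_ineq4)
  also have "\<dots> \<le> n * (m * norm x) + m * (n * norm x)"
    unfolding N_def M_def
    by (intro add_mono order_trans[OF n(2)] order_trans[OF m(2)] mult_left_mono n m)
  finally show "norm (S (T x) - T (S x)) \<le> 2 * n * m * norm x"
    by (simp add: algebra_simps)
qed (use n m in simp)

theorem mainTheorem2:
  fixes S T A B C D :: "'a::chilbert \<Rightarrow> 'a"
  assumes "separable_space TYPE('a)"
    and "normal_op S" and "normal_op T"
    and "selfadjoint_op A" and "selfadjoint_op C"
    and "selfadjoint_op B" and "selfadjoint_op D"
    and "\<forall>x. S x = A x + cscale \<i> (C x)"
    and "\<forall>x. T x = B x + cscale \<i> (D x)"
    and "positive_op C" and "positive_op D"
  shows "onorm (\<lambda>x. S (T x) - T (S x))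
    \<le> 1/2 * sqrt (4 * (onorm A)\<^sup>2 + (onorm C)\<^sup>2) * sqrt (4 * (onorm B)\<^sup>2 + (onorm D)\<^sup>2)"
proof -
  have "bounded_op S" "bounded_op T"
    using assms(2,3) by (simp_all add: normal_op_def)
  then have "onorm (\<lambda>x. S (T x) - T (S x))
      \<le> 2 * (sqrt (4 * (onorm A)\<^sup>2 + (onorm C)\<^sup>2) / 2) * (sqrt (4 * (onorm B)\<^sup>2 + (onorm D)\<^sup>2) / 2)"
    by (rule onorm_commutator_le[OF _ _ _ normal_op_norm_shift_le[OF assms(2,4,10,8)]
          _ normal_op_norm_shift_le[OF assms(3,6,11,9)]]) simp_all
  then show ?thesis
    by simp
qed

end
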